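(* Let $f:\mathbb{N}\to\mathbb{N}$ be a unary extended polynomial. Then there exists $m\in\mathbb{N}$ such that for all $n_1,n_2\geq m$, if $n_1\geq n_2$ then $f(n_1)\geq f(n_2)$.
   Context: The class of extended polynomials is the smallest class of functions $\mathbb{N}^k\to\mathbb{N}$ (of all arities $k$) that contains the constant functions $0$ and $1$, all projections, addition, multiplication, and the function $\mathrm{ifzero}(n,m,p)=m$ if $n=0$ and $=p$ otherwise, and that is closed under composition. *)

theory Defs
  imports Main
begin

text \<open>A k-ary function N^k -> N is represented as a function on lists of naturals,
  of which only the values on lists of length k are relevant.\<close>

definition ifzero :: "nat \<Rightarrow> nat \<Rightarrow> nat \<Rightarrow> nat" where
  "ifzero n m p = (if n = 0 then m else p)"

inductive ext_poly :: "nat \<Rightarrow> (nat list \<Rightarrow> nat) \<Rightarrow> bool" where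
  zero: "ext_poly k (\<lambda>xs. 0)"
| one: "ext_poly k (\<lambda>xs. 1)"
| proj: "i < k \<Longrightarrow> ext_poly k (\<lambda>xs. xs ! i)"
| add: "ext_poly 2 (\<lambda>xs. xs ! 0 + xs ! 1)"
| mult: "ext_poly 2 (\<lambda>xs. xs ! 0 * xs ! 1)"
| ifz: "ext_poly 3 (\<lambda>xs. ifzero (xs ! 0) (xs ! 1) (xs ! 2))"
| comp: "\<lbrakk> ext_poly (length hs) g; \<forall>h \<in> set hs. ext_poly k h \<rbrakk>
         \<Longrightarrow> ext_poly k (\<lambda>xs. g (map (\<lambda>h. h xs) hs))"

definition unary_ext_poly :: "(nat \<Rightarrow> nat) \<Rightarrow> bool" where
  "unary_ext_poly f \<longleftrightarrow> (\<exists>F. ext_poly 1 F \<and> (\<forall>n. f n = F [n]))"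

end

theory Submission
  imports Defs
begin

text \<open>Every extended polynomial maps eventually monotone arguments to an eventually monotone
  function; the identity is eventually monotone. For \<open>ifzero\<close> the point is that an eventually monotone
  function into \<open>\<nat>\<close> is eventually zero or eventually positive, so \<open>ifzero (f n) (g n) (h n)\<close>
  eventually coincides with \<open>g n\<close> or with \<open>h n\<close>.\<close>

definition eventually_monotone :: "(nat \<Rightarrow> nat) \<Rightarrow> bool" where
  "eventually_monotone f \<longleftrightarrow> (\<exists>m. mono_on {m..} f)"

lemma eventually_monotone_const: "eventually_monotone (\<lambda>n. c)"
  unfolding eventually_monotone_def by (auto intro: mono_onI)

lemma eventually_monotone_id: "eventually_monotone (\<lambda>n. n)"
  unfolding eventually_monotone_def by (auto intro: mono_onI)

lemma eventually_monotone_cong: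
  assumes "\<And>n. n \<ge> m \<Longrightarrow> f n = g n" and "eventually_monotone g"
  shows "eventually_monotone f"
proof -
  obtain m' where "mono_on {m'..} g"
    using assms(2) unfolding eventually_monotone_def by blast
  then have "mono_on {max m m'..} f"
    using assms(1) by (auto simp: mono_on_def)
  then show ?thesis
    unfolding eventually_monotone_def by blast
qed

lemma eventually_monotone_binop:
  assumes op_mono: "\<And>a b c d. a \<le> b \<Longrightarrow> c \<le> d \<Longrightarrow> op a c \<le> op b d"
    and "eventually_monotone f" "eventually_monotone g"
  shows "eventually_monotone (\<lambda>n. op (f n) (g n))"
proof -
  obtain m1 m2 where "mono_on {m1..} f" "mono_on {m2..} g"
    using assms(2,3) unfolding eventually_monotone_def by blast
  then have "mono_on {max m1 m2..} (\<lambda>n. op (f n) (g n))"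
    by (auto intro!: op_mono simp: mono_on_def)
  then show ?thesis
    unfolding eventually_monotone_def by blast
qed

lemma eventually_monotone_add:
  "eventually_monotone f \<Longrightarrow> eventually_monotone g \<Longrightarrow> eventually_monotone (\<lambda>n. f n + g n)"
  by (rule eventually_monotone_binop) (rule add_mono)

lemma eventually_monotone_mult:
  "eventually_monotone f \<Longrightarrow> eventually_monotone g \<Longrightarrow> eventually_monotone (\<lambda>n. f n * g n)"
  by (rule eventually_monotone_binop) (rule mult_le_mono)

lemma eventually_monotone_zero_or_pos:
  assumes "eventually_monotone f"
  obtains m where "\<And>n. n \<ge> m \<Longrightarrow> f n = 0" | m where "\<And>n. n \<ge> m \<Longrightarrow> f n > 0"
proof -
  obtain m where mono: "mono_on {m..} f"
    using assms unfolding eventually_monotone_def by blast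
  show thesis
  proof (cases "\<exists>n0\<ge>m. f n0 > 0")
    case True
    then obtain n0 where "n0 \<ge> m" "f n0 > 0" by blast
    then have "f n > 0" if "n \<ge> n0" for n
      using mono_onD[OF mono, of n0 n] that by simp
    then show thesis by (rule that(2))
  next
    case False
    then show thesis by (auto intro: that(1))
  qed
qed

lemma eventually_monotone_ifzero:
  assumes "eventually_monotone f" "eventually_monotone g" "eventually_monotone h"
  shows "eventually_monotone (\<lambda>n. ifzero (f n) (g n) (h n))"
  using assms(1)
proof (cases rule: eventually_monotone_zero_or_pos)
  case (1 m)
  have "ifzero (f n) (g n) (h n) = g n" if "n \<ge> m" for n
    using 1[OF that] by (simp add: ifzero_def)
  then show ?thesis
    by (rule eventually_monotone_cong[OF _ assms(2)])
next
  case (2 m)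
  have "ifzero (f n) (g n) (h n) = h n" if "n \<ge> m" for n
    using 2[OF that] by (simp add: ifzero_def)
  then show ?thesis
    by (rule eventually_monotone_cong[OF _ assms(3)])
qed

lemma ext_poly_eventually_monotone:
  assumes "ext_poly k F" "length us = k" "\<forall>u\<in>set us. eventually_monotone u"
  shows "eventually_monotone (\<lambda>n. F (map (\<lambda>u. u n) us))"
  using assms
proof (induction arbitrary: us rule: ext_poly.induct)
  case (zero k)
  then show ?case by (simp add: eventually_monotone_const)
next
  case (one k)
  then show ?case by (simp add: eventually_monotone_const)
next
  case (proj i k)
  then show ?case by simp
next
  case add
  then obtain u0 u1 where "us = [u0, u1]"
    by (auto simp: numeral_2_eq_2 length_Suc_conv)
  with add.prems show ?case by (simp add: eventually_monotone_add)
next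
  case mult
  then obtain u0 u1 where "us = [u0, u1]"
    by (auto simp: numeral_2_eq_2 length_Suc_conv)
  with mult.prems show ?case by (simp add: eventually_monotone_mult)
next
  case ifz
  then obtain u0 u1 u2 where "us = [u0, u1, u2]"
    by (auto simp: numeral_3_eq_3 length_Suc_conv)
  with ifz.prems show ?case by (simp add: eventually_monotone_ifzero)
next
  case (comp hs g k)
  let ?vs = "map (\<lambda>h n. h (map (\<lambda>u. u n) us)) hs"
  have "\<forall>v\<in>set ?vs. eventually_monotone v"
    using comp.IH(2) comp.prems by auto
  then have "eventually_monotone (\<lambda>n. g (map (\<lambda>v. v n) ?vs))"
    using comp.IH(1)[of ?vs] by simp
  then show ?case by (simp add: o_def)
qed

theorem proposition1:
  fixes f :: "nat \<Rightarrow> nat"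
  assumes "unary_ext_poly f"
  shows "\<exists>m. \<forall>n1 n2. n1 \<ge> m \<longrightarrow> n2 \<ge> m \<longrightarrow> n1 \<ge> n2 \<longrightarrow> f n1 \<ge> f n2"
proof -
  obtain F where F: "ext_poly 1 F" and f_eq: "\<forall>n. f n = F [n]"
    using assms unfolding unary_ext_poly_def by blast
  have "eventually_monotone (\<lambda>n. F (map (\<lambda>u. u n) [\<lambda>n. n]))"
    using ext_poly_eventually_monotone[OF F, of "[\<lambda>n. n]"] eventually_monotone_id by simp
  moreover have "(\<lambda>n. F [n]) = f"
    using f_eq by (simp add: fun_eq_iff)
  ultimately have "eventually_monotone f"
    by simp
  then show ?thesis
    unfolding eventually_monotone_def mono_on_def by auto
qed

end
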